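(* Let $E$ be an acyclic directed graph and let $G(E)$ carry a Hausdorff topology $\tau$ making it a topological semigroup. Then $(G(E),\tau)$ embeds (as a subsemigroup and topological subspace) densely into a CLP-compact topological semigroup $S$ if and only if $(G(E),\tau)$ is compact, i.e., $\tau=\tau_c$.
   Context: All spaces are Hausdorff. CLP-compact: every cover by clopen sets has a finite subcover. A directed graph $E=(E^0,E^1,r,s)$ has vertex set $E^0$, edge set $E^1$, source and range maps $s,r:E^1\to E^0$; paths are vertices (length zero) and sequences of edges $e_1\ldots e_n$ with $r(e_i)=s(e_{i+1})$; a cycle is a path $x$ of non-zero length with $s(x)=r(x)$; $E$ is acyclic if it has no cycles. The graph inverse semigroup $G(E)$ is the semigroup with zero $0$ generated by $E^0$, $E^1$, $E^{-1}=\{e^{-1}\mid e\in E^1\}$ subject to: for $a,b\in E^0$, $e,f\in E^1$: $ab=a$ if $a=b$, else $0$; $s(e)e=er(e)=e$; $e^{-1}s(e)=r(e)e^{-1}=e^{-1}$; $e^{-1}f=r(e)$ if $e=f$, else $0$. Non-zero elements are uniquely $uv^{-1}$ with $u,v$ paths, $r(u)=r(v)$. The topology $\tau_c$ on $G(E)$: non-zero elements are isolated and the neighborhoods of $0$ are the cofinite sets containing $0$. *)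

theory Defs
  imports "HOL-Analysis.Analysis"
begin

text \<open>We encode a path by its list of edges together
  with its terminal vertex w (its range); for the empty list the path is the vertex w.\<close>

definition gpath :: "'v set \<Rightarrow> 'e set \<Rightarrow> ('e \<Rightarrow> 'v) \<Rightarrow> ('e \<Rightarrow> 'v) \<Rightarrow> 'e list \<Rightarrow> 'v \<Rightarrow> bool" where
  "gpath V Ed sr rg p w \<longleftrightarrow> w \<in> V \<and> set p \<subseteq> Ed \<and> (p \<noteq> [] \<longrightarrow> rg (last p) = w)
     \<and> (\<forall>i. Suc i < length p \<longrightarrow> rg (p ! i) = sr (p ! Suc i))"

definition pstart :: "('e \<Rightarrow> 'v) \<Rightarrow> 'v \<Rightarrow> 'e list \<Rightarrow> 'v" where
  "pstart sr w p = (if p = [] then w else sr (hd p))"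

definition graph_acyclic :: "'v set \<Rightarrow> 'e set \<Rightarrow> ('e \<Rightarrow> 'v) \<Rightarrow> ('e \<Rightarrow> 'v) \<Rightarrow> bool" where
  "graph_acyclic V Ed sr rg \<longleftrightarrow> \<not> (\<exists>p w. p \<noteq> [] \<and> gpath V Ed sr rg p w \<and> pstart sr w p = w)"

text \<open>Elements of the graph inverse semigroup: None is 0, Some (p, q, w) is u v^{-1}
  where u, v are the paths encoded by (p, w) and (q, w) (so r(u) = r(v) = w).\<close>
type_synonym ('v, 'e) gis = "('e list \<times> 'e list \<times> 'v) option"

definition gis_carrier :: "'v set \<Rightarrow> 'e set \<Rightarrow> ('e \<Rightarrow> 'v) \<Rightarrow> ('e \<Rightarrow> 'v) \<Rightarrow> ('v, 'e) gis set" where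
  "gis_carrier V Ed sr rg = insert None
     {Some (p, q, w) | p q w. gpath V Ed sr rg p w \<and> gpath V Ed sr rg q w}"

text \<open>Multiplication (u v^{-1})(x y^{-1}) = (u z) y^{-1} if x = v z, = u (y z)^{-1} if v = x z,
  and 0 otherwise.\<close>
definition gis_mult :: "('e \<Rightarrow> 'v) \<Rightarrow> ('v, 'e) gis \<Rightarrow> ('v, 'e) gis \<Rightarrow> ('v, 'e) gis" where
  "gis_mult sr a b = (case a of None \<Rightarrow> None | Some (p, q, w) \<Rightarrow>
     (case b of None \<Rightarrow> None | Some (p', q', w') \<Rightarrow>
       (if \<exists>z. p' = q @ z \<and> pstart sr w' z = w then Some (p @ drop (length q) p', q', w')
        else if \<exists>z. q = p' @ z \<and> pstart sr w z = w' then Some (p, q' @ drop (length p') q, w)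
        else None)))"

definition is_tau_c :: "'v set \<Rightarrow> 'e set \<Rightarrow> ('e \<Rightarrow> 'v) \<Rightarrow> ('e \<Rightarrow> 'v) \<Rightarrow> ('v, 'e) gis topology \<Rightarrow> bool" where
  "is_tau_c V Ed sr rg T \<longleftrightarrow> (\<forall>U. openin T U \<longleftrightarrow>
     U \<subseteq> gis_carrier V Ed sr rg \<and> (None \<in> U \<longrightarrow> finite (gis_carrier V Ed sr rg - U)))"

definition topological_semigroup :: "'a topology \<Rightarrow> ('a \<Rightarrow> 'a \<Rightarrow> 'a) \<Rightarrow> bool" where
  "topological_semigroup T m \<longleftrightarrow>
     (\<forall>x\<in>topspace T. \<forall>y\<in>topspace T. m x y \<in> topspace T) \<and>
     (\<forall>x\<in>topspace T. \<forall>y\<in>topspace T. \<forall>z\<in>topspace T. m (m x y) z = m x (m y z)) \<and>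
     continuous_map (prod_topology T T) T (\<lambda>(x, y). m x y)"

definition CLP_compact :: "'a topology \<Rightarrow> bool" where
  "CLP_compact T \<longleftrightarrow> (\<forall>\<U>. (\<forall>U\<in>\<U>. closedin T U \<and> openin T U) \<and> topspace T \<subseteq> \<Union>\<U> \<longrightarrow>
     (\<exists>\<F>\<subseteq>\<U>. finite \<F> \<and> topspace T \<subseteq> \<Union>\<F>))"

definition dense_CLP_embedding ::
  "'a topology \<Rightarrow> ('a \<Rightarrow> 'a \<Rightarrow> 'a) \<Rightarrow> 'b topology \<Rightarrow> ('b \<Rightarrow> 'b \<Rightarrow> 'b) \<Rightarrow> ('a \<Rightarrow> 'b) \<Rightarrow> bool" where
  "dense_CLP_embedding T m S mS h \<longleftrightarrow>
     Hausdorff_space S \<and> topological_semigroup S mS \<and> CLP_compact S \<and>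
     embedding_map T S h \<and>
     (\<forall>x\<in>topspace T. \<forall>y\<in>topspace T. h (m x y) = mS (h x) (h y)) \<and>
     S closure_of (h ` topspace T) = topspace S"

end

theory Submission
  imports Defs
begin

text \<open>
  Every nonzero element is
  isolated. Near a vertex w all pairwise products are nonzero, which by acyclicity forces every
  other element to be p p^-1 for paths p leaving w through one common first edge e; these are
  fixed by right multiplication with e e^-1 while w is not. For u v^-1 one pulls the isolated
  vertex r(u) back along the continuous map z |-> u^-1 z v, whose fibre over r(u) is finite.
  Hence tau is compact iff every neighbourhood of 0 is cofinite, i.e. iff tau = tau_c, and a
  compact G(E) is its own dense CLP-compact extension.

  Conversely, let h embed G(E) densely into a CLP-compact semigroup S. Then h(0) is a zero of
  S and the images of nonzero elements remain isolated in S, so every infinite family of them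
  has a cluster point. A cluster point s of infinitely many pairwise orthogonal idempotents
  satisfies s = s s = 0, so such idempotents converge to 0, and so does every product with a
  family converging to 0. Writing the elements u v^-1 of an infinite set as products with the
  vertices r(u) (if infinitely many ranges occur) or with u u^-1 resp. v v^-1 (if the range is
  fixed) yields an infinite subset converging to 0; hence no neighbourhood of 0 misses
  infinitely many elements.
\<close>

lemma topological_semigroup_mult_nbhds:
  assumes "topological_semigroup X m" "x \<in> topspace X" "y \<in> topspace X" "openin X W" "m x y \<in> W"
  obtains A B where "openin X A" "openin X B" "x \<in> A" "y \<in> B"
    "\<And>a b. a \<in> A \<Longrightarrow> b \<in> B \<Longrightarrow> m a b \<in> W"
proof -
  define P where "P = {z \<in> topspace (prod_topology X X). (\<lambda>(x, y). m x y) z \<in> W}"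
  have "continuous_map (prod_topology X X) X (\<lambda>(x, y). m x y)"
    using assms(1) by (simp add: topological_semigroup_def)
  then have "openin (prod_topology X X) P"
    unfolding P_def using assms(4) by (rule openin_continuous_map_preimage)
  moreover have "(x, y) \<in> P"
    using assms(2,3,5) by (simp add: P_def)
  ultimately obtain A B where AB: "openin X A" "openin X B" "x \<in> A" "y \<in> B" "A \<times> B \<subseteq> P"
    by (metis openin_prod_topology_alt)
  show thesis
  proof (rule that[OF AB(1-4)])
    fix a b
    assume "a \<in> A" "b \<in> B"
    then have "(a, b) \<in> P"
      using AB(5) by blast
    then show "m a b \<in> W"
      by (simp add: P_def)
  qed
qed

lemma topological_semigroup_flip:
  assumes "topological_semigroup X m"
  shows "topological_semigroup X (\<lambda>x y. m y x)"
proof -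
  have "continuous_map (prod_topology X X) X ((\<lambda>(x, y). m x y) \<circ> (\<lambda>(x, y). (y, x)))"
    using homeomorphic_imp_continuous_map[OF homeomorphic_map_swap] assms
    unfolding topological_semigroup_def by (blast intro: continuous_map_compose)
  moreover have "(\<lambda>(x, y). m x y) \<circ> (\<lambda>(x, y). (y, x)) = (\<lambda>(x, y). m y x)"
    by auto
  ultimately show ?thesis
    using assms by (simp add: topological_semigroup_def)
qed

lemma continuous_map_semigroup_left:
  assumes "topological_semigroup X m" "c \<in> topspace X"
  shows "continuous_map X X (m c)"
proof -
  have "continuous_map X (prod_topology X X) (\<lambda>z. (c, z))"
    using assms(2) by (simp add: continuous_map_pairedI)
  then have "continuous_map X X ((\<lambda>(x, y). m x y) \<circ> (\<lambda>z. (c, z)))"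
    using assms(1) unfolding topological_semigroup_def by (blast intro: continuous_map_compose)
  then show ?thesis by (simp add: o_def)
qed

lemma continuous_map_semigroup_right:
  "topological_semigroup X m \<Longrightarrow> c \<in> topspace X \<Longrightarrow> continuous_map X X (\<lambda>z. m z c)"
  using continuous_map_semigroup_left[OF topological_semigroup_flip] .

lemma continuous_map_semigroup_square:
  assumes "topological_semigroup X m"
  shows "continuous_map X X (\<lambda>z. m z z)"
proof -
  have "continuous_map X (prod_topology X X) (\<lambda>z. (z, z))"
    by (simp add: continuous_map_pairedI)
  then have "continuous_map X X ((\<lambda>(x, y). m x y) \<circ> (\<lambda>z. (z, z)))"
    using assms unfolding topological_semigroup_def by (blast intro: continuous_map_compose)
  then show ?thesis by (simp add: o_def)
qed

lemma products_avoid_nbhd: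
  assumes "t1_space X" "topological_semigroup X m" "x \<in> topspace X" "z \<in> topspace X" "m x x \<noteq> z"
  obtains N where "openin X N" "x \<in> N" "\<And>a b. a \<in> N \<Longrightarrow> b \<in> N \<Longrightarrow> m a b \<noteq> z"
proof -
  have "m x x \<in> topspace X"
    using assms(2,3) by (simp add: topological_semigroup_def)
  with assms(1,4,5) obtain W where W: "openin X W" "m x x \<in> W" "z \<notin> W"
    unfolding t1_space_def by metis
  obtain A B where AB: "openin X A" "openin X B" "x \<in> A" "x \<in> B"
      "\<And>a b. a \<in> A \<Longrightarrow> b \<in> B \<Longrightarrow> m a b \<in> W"
    using topological_semigroup_mult_nbhds[OF assms(2,3,3) W(1,2)] by metis
  show thesis
  proof (rule that[of "A \<inter> B"])
    show "openin X (A \<inter> B)" "x \<in> A \<inter> B"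
      using AB(1-4) by auto
    show "m a b \<noteq> z" if "a \<in> A \<inter> B" "b \<in> A \<inter> B" for a b
      using AB(5) W(3) that by blast
  qed
qed

lemma right_zero_of_dense:
  assumes "Hausdorff_space X" "topological_semigroup X m" "X closure_of D = topspace X"
    "z \<in> topspace X" "\<And>d. d \<in> D \<Longrightarrow> m d z = z" "s \<in> topspace X"
  shows "m s z = z"
proof (rule forall_in_closure_of_eq[of s X D X "\<lambda>x. m x z" "\<lambda>_. z"])
  show "continuous_map X X (\<lambda>x. m x z)"
    using assms(2,4) by (rule continuous_map_semigroup_right)
qed (use assms in auto)

lemma isolated_in_dense_subspace:
  assumes "t1_space X" "X closure_of D = topspace X" "openin (subtopology X D) {y}"
  shows "openin X {y}"
proof -
  obtain U where U: "openin X U" "{y} = U \<inter> D"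
    using assms(3) by (auto simp: openin_subtopology)
  have "y \<in> topspace X"
    using U openin_subset by blast
  then have "closedin X {y}"
    by (simp add: assms(1) closedin_t1_singleton)
  then have "openin X (U - {y})"
    using U(1) by blast
  moreover have "D \<inter> (U - {y}) = {}"
    using U(2) by blast
  ultimately have "U - {y} = {}"
    using assms(2) unfolding dense_intersects_open by blast
  then have "U = {y}"
    using U(2) by blast
  then show ?thesis
    using U(1) by simp
qed

lemma isolated_if_finite_open_nbhd:
  assumes "t1_space X" "openin X F" "finite F" "a \<in> F"
  shows "openin X {a}"
proof -
  have "F - {a} \<subseteq> topspace X"
    using openin_subset[OF assms(2)] by blast
  then have "closedin X (F - {a})"
    using assms(1,3) by (simp add: t1_space_closedin_finite)
  then have "openin X (F - (F - {a}))"
    using assms(2) by blast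
  moreover have "F - (F - {a}) = {a}"
    using assms(4) by blast
  ultimately show ?thesis by simp
qed

section \<open>Compactness when all points but one are isolated\<close>

lemma compact_space_iff_cofinite_nbhds:
  assumes p: "p \<in> topspace X" and isolated: "\<And>x. x \<in> topspace X \<Longrightarrow> x \<noteq> p \<Longrightarrow> openin X {x}"
  shows "compact_space X \<longleftrightarrow> (\<forall>U. openin X U \<and> p \<in> U \<longrightarrow> finite (topspace X - U))"
proof (intro iffI allI impI)
  fix U
  assume "compact_space X" and U: "openin X U \<and> p \<in> U"
  then have "compactin X (topspace X - U)"
    using closedin_compact_space by blast
  moreover have "\<forall>C\<in>(\<lambda>x. {x}) ` (topspace X - U). openin X C"
    using U isolated by blast
  moreover have "topspace X - U \<subseteq> \<Union>((\<lambda>x. {x}) ` (topspace X - U))"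
    by blast
  ultimately obtain \<F> where \<F>: "finite \<F>" "\<F> \<subseteq> (\<lambda>x. {x}) ` (topspace X - U)"
      "topspace X - U \<subseteq> \<Union>\<F>"
    unfolding compactin_def by blast
  then have "finite (\<Union>\<F>)"
    by (intro finite_Union) auto
  with \<F>(3) show "finite (topspace X - U)"
    by (rule finite_subset)
next
  assume cofinite: "\<forall>U. openin X U \<and> p \<in> U \<longrightarrow> finite (topspace X - U)"
  show "compact_space X"
    unfolding compact_space_alt
  proof (intro allI impI)
    fix \<U>
    assume \<U>: "(\<forall>U\<in>\<U>. openin X U) \<and> topspace X \<subseteq> \<Union>\<U>"
    then obtain U0 where U0: "U0 \<in> \<U>" "p \<in> U0"
      using p by blast
    then have "finite (topspace X - U0)"
      using cofinite \<U> by blast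
    moreover have "topspace X - U0 \<subseteq> \<Union>\<U>"
      using \<U> by blast
    ultimately obtain \<F> where "finite \<F>" "\<F> \<subseteq> \<U>" "topspace X - U0 \<subseteq> \<Union>\<F>"
      by (rule finite_subset_Union)
    then show "\<exists>\<F>. finite \<F> \<and> \<F> \<subseteq> \<U> \<and> topspace X \<subseteq> \<Union>\<F>"
      using U0 by (intro exI[of _ "insert U0 \<F>"]) auto
  qed
qed

lemma openin_iff_cofinite_nbhds:
  assumes "t1_space X" and isolated: "\<And>x. x \<in> topspace X \<Longrightarrow> x \<noteq> p \<Longrightarrow> openin X {x}"
  shows "(\<forall>U. openin X U \<longleftrightarrow> U \<subseteq> topspace X \<and> (p \<in> U \<longrightarrow> finite (topspace X - U)))
     \<longleftrightarrow> (\<forall>U. openin X U \<and> p \<in> U \<longrightarrow> finite (topspace X - U))"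
proof
  assume cofinite: "\<forall>U. openin X U \<and> p \<in> U \<longrightarrow> finite (topspace X - U)"
  show "\<forall>U. openin X U \<longleftrightarrow> U \<subseteq> topspace X \<and> (p \<in> U \<longrightarrow> finite (topspace X - U))"
  proof (intro allI iffI)
    fix U
    assume "openin X U"
    then show "U \<subseteq> topspace X \<and> (p \<in> U \<longrightarrow> finite (topspace X - U))"
      using cofinite openin_subset by blast
  next
    fix U
    assume U: "U \<subseteq> topspace X \<and> (p \<in> U \<longrightarrow> finite (topspace X - U))"
    show "openin X U"
    proof (cases "p \<in> U")
      case True
      then have "closedin X (topspace X - U)"
        using U assms(1) by (simp add: t1_space_closedin_finite)
      then show ?thesis
        using U by (metis closedin_def double_diff order_refl)
    next
      case False
      then show ?thesis
        using U isolated by (subst openin_subopen) blast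
    qed
  qed
qed blast

lemma compact_imp_CLP_compact:
  assumes "compact_space X"
  shows "CLP_compact X"
  unfolding CLP_compact_def
proof (intro allI impI)
  fix \<U>
  assume "(\<forall>U\<in>\<U>. closedin X U \<and> openin X U) \<and> topspace X \<subseteq> \<Union>\<U>"
  then have "(\<forall>U\<in>\<U>. openin X U) \<and> topspace X \<subseteq> \<Union>\<U>"
    by blast
  then obtain \<F> where "finite \<F>" "\<F> \<subseteq> \<U>" "topspace X \<subseteq> \<Union>\<F>"
    using assms unfolding compact_space_alt by meson
  then show "\<exists>\<F>\<subseteq>\<U>. finite \<F> \<and> topspace X \<subseteq> \<Union>\<F>"
    by blast
qed

lemma self_dense_CLP_embedding:
  assumes "Hausdorff_space X" "topological_semigroup X m" "compact_space X"
  shows "dense_CLP_embedding X m X m id"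
  using assms compact_imp_CLP_compact by (simp add: dense_CLP_embedding_def embedding_map_def)

section \<open>Limits and cluster points along the cofinite filter\<close>

definition cofinite_limit :: "'a topology \<Rightarrow> 'i set \<Rightarrow> ('i \<Rightarrow> 'a) \<Rightarrow> 'a \<Rightarrow> bool" where
  "cofinite_limit X I x l \<longleftrightarrow> (\<forall>U. openin X U \<and> l \<in> U \<longrightarrow> finite {i \<in> I. x i \<notin> U})"

definition cofinite_cluster :: "'a topology \<Rightarrow> 'i set \<Rightarrow> ('i \<Rightarrow> 'a) \<Rightarrow> 'a \<Rightarrow> bool" where
  "cofinite_cluster X I x s \<longleftrightarrow>
     s \<in> topspace X \<and> (\<forall>U. openin X U \<and> s \<in> U \<longrightarrow> infinite {i \<in> I. x i \<in> U})"

lemma cofinite_cluster_in_closure_of: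
  assumes "cofinite_cluster X I x s" "finite K"
  shows "s \<in> X closure_of (x ` (I - K))"
  unfolding in_closure_of
proof (intro conjI allI impI)
  show "s \<in> topspace X"
    using assms(1) by (simp add: cofinite_cluster_def)
  fix U
  assume "s \<in> U \<and> openin X U"
  then have "infinite {i \<in> I. x i \<in> U}"
    using assms(1) by (simp add: cofinite_cluster_def)
  then have "infinite ({i \<in> I. x i \<in> U} - K)"
    by (rule Diff_infinite_finite[OF assms(2)])
  then obtain i where "i \<in> {i \<in> I. x i \<in> U} - K"
    by (metis equals0I infinite_imp_nonempty)
  then show "\<exists>y. y \<in> x ` (I - K) \<and> y \<in> U"
    by blast
qed

lemma CLP_compact_isolated_points_accumulate:
  assumes "CLP_compact X" "t1_space X" "A \<subseteq> topspace X" "infinite A"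
    and isolated: "\<And>a. a \<in> A \<Longrightarrow> openin X {a}"
  obtains s where "s \<in> topspace X" "\<And>U. openin X U \<Longrightarrow> s \<in> U \<Longrightarrow> infinite (U \<inter> A)"
proof (rule ccontr)
  assume "\<not> thesis"
  then have sparse: "\<forall>s\<in>topspace X. \<exists>U. openin X U \<and> s \<in> U \<and> finite (U \<inter> A)"
    using that by blast
  have "openin X (topspace X - A)"
  proof (subst openin_subopen, intro ballI)
    fix s
    assume s: "s \<in> topspace X - A"
    then obtain U where U: "openin X U" "s \<in> U" "finite (U \<inter> A)"
      using sparse by blast
    have "closedin X (U \<inter> A)"
      using U(3) assms(2,3) by (simp add: t1_space_closedin_finite le_infI2)
    then have "openin X (U - U \<inter> A)"
      using U(1) by blast
    moreover have "U - U \<inter> A \<subseteq> topspace X - A"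
      using openin_subset[OF U(1)] by blast
    ultimately show "\<exists>T. openin X T \<and> s \<in> T \<and> T \<subseteq> topspace X - A"
      using s U(2) by blast
  qed
  moreover have "closedin X (topspace X - A)"
    using isolated by (intro closedin_diff closedin_topspace) (subst openin_subopen, blast)
  moreover have "closedin X {a} \<and> openin X {a}" if "a \<in> A" for a
    using that isolated assms(2,3) by (meson closedin_t1_singleton subsetD)
  ultimately have clopen: "\<forall>U\<in>insert (topspace X - A) ((\<lambda>a. {a}) ` A). closedin X U \<and> openin X U"
    by blast
  have "topspace X \<subseteq> \<Union>(insert (topspace X - A) ((\<lambda>a. {a}) ` A))"
    by blast
  with clopen obtain \<F> where \<F>: "\<F> \<subseteq> insert (topspace X - A) ((\<lambda>a. {a}) ` A)" "finite \<F>"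
      "topspace X \<subseteq> \<Union>\<F>"
    using assms(1) unfolding CLP_compact_def by meson
  have "A \<subseteq> \<Union>(\<F> - {topspace X - A})"
    using \<F>(3) assms(3) by blast
  moreover have "finite (\<Union>(\<F> - {topspace X - A}))"
    using \<F>(1,2) by (intro finite_Union) auto
  ultimately show False
    using assms(4) finite_subset by blast
qed

lemma CLP_compact_cofinite_cluster:
  assumes "CLP_compact X" "t1_space X" "infinite I" "x ` I \<subseteq> topspace X"
    and isolated: "\<And>i. i \<in> I \<Longrightarrow> x i \<noteq> p \<Longrightarrow> openin X {x i}"
  obtains s where "cofinite_cluster X I x s"
proof (cases "finite (x ` I)")
  case True
  then obtain i0 where i0: "i0 \<in> I" "infinite {i \<in> I. x i = x i0}"
    using pigeonhole_infinite assms(3) by blast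
  have "infinite {i \<in> I. x i \<in> U}" if "x i0 \<in> U" for U
  proof (rule infinite_super[OF _ i0(2)])
    show "{i \<in> I. x i = x i0} \<subseteq> {i \<in> I. x i \<in> U}"
      using that by auto
  qed
  then show thesis
    using that[of "x i0"] i0(1) assms(4) by (auto simp: cofinite_cluster_def)
next
  case False
  then have "infinite (x ` I - {p})"
    by simp
  moreover have "x ` I - {p} \<subseteq> topspace X"
    using assms(4) by blast
  moreover have "openin X {a}" if "a \<in> x ` I - {p}" for a
    using that isolated by blast
  ultimately obtain s where s: "s \<in> topspace X"
      "\<And>U. openin X U \<Longrightarrow> s \<in> U \<Longrightarrow> infinite (U \<inter> (x ` I - {p}))"
    using CLP_compact_isolated_points_accumulate[OF assms(1,2)] by metis
  have "infinite {i \<in> I. x i \<in> U}" if "openin X U" "s \<in> U" for U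
  proof
    assume "finite {i \<in> I. x i \<in> U}"
    moreover have "U \<inter> (x ` I - {p}) \<subseteq> x ` {i \<in> I. x i \<in> U}"
      by blast
    ultimately show False
      using s(2)[OF that] by (meson finite_imageI finite_subset)
  qed
  then show thesis
    using that[of s] s(1) by (simp add: cofinite_cluster_def)
qed

lemma cofinite_limit_cong:
  assumes "\<And>i. i \<in> I \<Longrightarrow> x i = y i"
  shows "cofinite_limit X I x l \<longleftrightarrow> cofinite_limit X I y l"
proof -
  have "{i \<in> I. x i \<notin> U} = {i \<in> I. y i \<notin> U}" for U
    using assms by auto
  then show ?thesis
    by (simp add: cofinite_limit_def)
qed

lemma infinite_inj_on_subset:
  assumes "infinite (f ` C)"
  obtains I where "I \<subseteq> C" "infinite I" "inj_on f I"
proof -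
  obtain I where "I \<subseteq> C" "inj_on f I" "f ` C = f ` I"
    using subset_image_inj[of "f ` C" f C] by blast
  then show thesis
    using that assms by (metis finite_imageI)
qed

lemma cofinite_limit_zero_mult_left:
  assumes "topological_semigroup X m" "z \<in> topspace X" and zero: "\<And>s. s \<in> topspace X \<Longrightarrow> m s z = z"
    and lim: "cofinite_limit X I a z"
    and clusters: "\<And>J. J \<subseteq> I \<Longrightarrow> infinite J \<Longrightarrow> \<exists>s. cofinite_cluster X J b s"
  shows "cofinite_limit X I (\<lambda>i. m (b i) (a i)) z"
  unfolding cofinite_limit_def
proof (intro allI impI)
  fix W
  assume W: "openin X W \<and> z \<in> W"
  define J where "J = {i \<in> I. m (b i) (a i) \<notin> W}"
  show "finite J"
  proof (rule ccontr)
    assume "infinite J"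
    then obtain s where s: "cofinite_cluster X J b s"
      using clusters[of J] by (auto simp: J_def)
    then have "s \<in> topspace X"
      by (simp add: cofinite_cluster_def)
    moreover have "m s z \<in> W"
      using zero[OF \<open>s \<in> topspace X\<close>] W by simp
    ultimately obtain A B where AB: "openin X A" "openin X B" "s \<in> A" "z \<in> B"
        "\<And>x y. x \<in> A \<Longrightarrow> y \<in> B \<Longrightarrow> m x y \<in> W"
      using topological_semigroup_mult_nbhds[OF assms(1) _ assms(2)] W by metis
    have "infinite ({i \<in> J. b i \<in> A} - {i \<in> I. a i \<notin> B})"
    proof (rule Diff_infinite_finite)
      show "finite {i \<in> I. a i \<notin> B}"
        using lim AB(2,4) by (simp add: cofinite_limit_def)
      show "infinite {i \<in> J. b i \<in> A}"
        using s AB(1,3) by (simp add: cofinite_cluster_def)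
    qed
    then obtain i where i: "i \<in> J" "b i \<in> A" "a i \<in> B"
      by (auto simp: J_def dest!: infinite_imp_nonempty)
    then show False
      using AB(5) by (simp add: J_def)
  qed
qed

lemma cofinite_limit_zero_mult_right:
  assumes "topological_semigroup X m" "z \<in> topspace X" and zero: "\<And>s. s \<in> topspace X \<Longrightarrow> m z s = z"
    and lim: "cofinite_limit X I a z"
    and clusters: "\<And>J. J \<subseteq> I \<Longrightarrow> infinite J \<Longrightarrow> \<exists>s. cofinite_cluster X J b s"
  shows "cofinite_limit X I (\<lambda>i. m (a i) (b i)) z"
  using cofinite_limit_zero_mult_left[OF topological_semigroup_flip[OF assms(1)] assms(2)]
    zero lim clusters by blast

lemma orthogonal_idempotents_cluster_eq_zero:
  assumes "Hausdorff_space X" "topological_semigroup X m" "z \<in> topspace X" "e ` I \<subseteq> topspace X"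
    and idem: "\<And>i. i \<in> I \<Longrightarrow> m (e i) (e i) = e i"
    and orth: "\<And>i j. i \<in> I \<Longrightarrow> j \<in> I \<Longrightarrow> i \<noteq> j \<Longrightarrow> m (e i) (e j) = z"
    and s: "cofinite_cluster X I e s"
  shows "s = z"
proof -
  have s_top: "s \<in> topspace X"
    using s by (simp add: cofinite_cluster_def)
  have near: "s \<in> X closure_of (e ` (I - K))" if "finite K" for K
    using cofinite_cluster_in_closure_of[OF s that] .
  have "m s s = s"
  proof (rule forall_in_closure_of_eq[where f="\<lambda>x. m x x" and g="\<lambda>x. x", OF near[of "{}"] assms(1)])
    show "continuous_map X X (\<lambda>x. m x x)"
      using assms(2) by (rule continuous_map_semigroup_square)
    show "m x x = x" if "x \<in> e ` (I - {})" for x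
      using that idem by auto
  qed (use continuous_map_id[of X] in \<open>simp_all add: id_def\<close>)
  moreover have annihilated: "m (e k) s = z" if "k \<in> I" for k
  proof (rule forall_in_closure_of_eq[where f="m (e k)" and g="\<lambda>_. z", OF near[of "{k}"] assms(1)])
    show "continuous_map X X (m (e k))"
      using assms(2,4) that by (simp add: continuous_map_semigroup_left image_subset_iff)
    show "m (e k) x = z" if "x \<in> e ` (I - {k})" for x
      using that orth \<open>k \<in> I\<close> by auto
  qed (simp_all add: assms(3))
  moreover have "m s s = z"
  proof (rule forall_in_closure_of_eq[where f="\<lambda>x. m x s" and g="\<lambda>_. z", OF near[of "{}"] assms(1)])
    show "continuous_map X X (\<lambda>x. m x s)"
      using assms(2) s_top by (rule continuous_map_semigroup_right)
    show "m x s = z" if "x \<in> e ` (I - {})" for x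
      using that annihilated by auto
  qed (simp_all add: assms(3))
  ultimately show "s = z"
    by simp
qed

lemma orthogonal_idempotents_cofinite_limit:
  assumes "Hausdorff_space X" "topological_semigroup X m" "z \<in> topspace X" "e ` I \<subseteq> topspace X"
    and idem: "\<And>i. i \<in> I \<Longrightarrow> m (e i) (e i) = e i"
    and orth: "\<And>i j. i \<in> I \<Longrightarrow> j \<in> I \<Longrightarrow> i \<noteq> j \<Longrightarrow> m (e i) (e j) = z"
    and clusters: "\<And>J. J \<subseteq> I \<Longrightarrow> infinite J \<Longrightarrow> \<exists>s. cofinite_cluster X J e s"
  shows "cofinite_limit X I e z"
  unfolding cofinite_limit_def
proof (intro allI impI)
  fix W
  assume W: "openin X W \<and> z \<in> W"
  define J where "J = {i \<in> I. e i \<notin> W}"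
  show "finite J"
  proof (rule ccontr)
    assume "infinite J"
    then obtain s where s: "cofinite_cluster X J e s"
      using clusters[of J] by (auto simp: J_def)
    have "s = z"
    proof (rule orthogonal_idempotents_cluster_eq_zero[OF assms(1-3) _ _ _ s])
      show "e ` J \<subseteq> topspace X"
        using assms(4) by (auto simp: J_def)
      show "m (e i) (e i) = e i" if "i \<in> J" for i
        using that idem by (simp add: J_def)
      show "m (e i) (e j) = z" if "i \<in> J" "j \<in> J" "i \<noteq> j" for i j
        using that orth by (simp add: J_def)
    qed
    then have "infinite {i \<in> J. e i \<in> W}"
      using s W by (simp add: cofinite_cluster_def)
    then show False
      by (simp add: J_def)
  qed
qed

lemma embedding_map_cofinite_limit:
  assumes h: "embedding_map X Y h" and x: "x ` I \<subseteq> topspace X"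
    and lim: "cofinite_limit Y I (\<lambda>i. h (x i)) (h l)"
  shows "cofinite_limit X I x l"
  unfolding cofinite_limit_def
proof (intro allI impI)
  fix U
  assume U: "openin X U \<and> l \<in> U"
  have hom: "homeomorphic_map X (subtopology Y (h ` topspace X)) h"
    using h by (simp add: embedding_map_def)
  then have "openin (subtopology Y (h ` topspace X)) (h ` U)"
    using U openin_subset homeomorphic_map_openness by metis
  then obtain V where V: "openin Y V" "h ` U = V \<inter> h ` topspace X"
    by (auto simp: openin_subtopology)
  then have "finite {i \<in> I. h (x i) \<notin> V}"
    using lim U by (auto simp: cofinite_limit_def)
  moreover have "{i \<in> I. x i \<notin> U} \<subseteq> {i \<in> I. h (x i) \<notin> V}"
  proof clarify
    fix i
    assume "i \<in> I" "x i \<notin> U" "h (x i) \<in> V"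
    then have "h (x i) \<in> h ` U"
      using V(2) x by auto
    then show False
      using \<open>x i \<notin> U\<close> \<open>i \<in> I\<close> x U homeomorphic_imp_injective_map[OF hom] openin_subset
      by (metis image_subset_iff inj_on_image_mem_iff)
  qed
  ultimately show "finite {i \<in> I. x i \<notin> U}"
    by (rule finite_subset[rotated])
qed

lemma gpath_Nil [simp]: "gpath V Ed sr rg [] w \<longleftrightarrow> w \<in> V"
  by (simp add: gpath_def)

lemma gpath_suffix:
  assumes "gpath V Ed sr rg (q @ z) w" "z \<noteq> []"
  shows "gpath V Ed sr rg z w"
proof -
  have "rg (z ! i) = sr (z ! Suc i)" if "Suc i < length z" for i
    using assms(1) that unfolding gpath_def
    by (metis (no_types, lifting) add_Suc_right length_append nat_add_left_cancel_less
        nth_append_length_plus)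
  then show ?thesis
    using assms unfolding gpath_def by auto
qed

locale acyclic_graph =
  fixes V :: "'v set" and Ed :: "'e set" and sr rg :: "'e \<Rightarrow> 'v"
  assumes graph: "\<forall>e\<in>Ed. sr e \<in> V \<and> rg e \<in> V"
    and acyclic: "graph_acyclic V Ed sr rg"
begin

abbreviation "G \<equiv> gis_carrier V Ed sr rg"
abbreviation "m \<equiv> gis_mult sr"

lemma Some_in_carrier_iff [simp]: "Some (p, q, w) \<in> G \<longleftrightarrow> gpath V Ed sr rg p w \<and> gpath V Ed sr rg q w"
  by (auto simp: gis_carrier_def)

lemma None_in_carrier [simp]: "None \<in> G"
  by (simp add: gis_carrier_def)

lemma mult_None_left [simp]: "m None x = None"
  by (simp add: gis_mult_def)

lemma mult_None_right [simp]: "m x None = None"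
  by (cases x) (auto simp: gis_mult_def)

lemma closed_suffix_Nil:
  assumes "gpath V Ed sr rg (q @ z) w" "pstart sr w z = w"
  shows "z = []"
  using acyclic gpath_suffix[OF assms(1)] assms(2) by (auto simp: graph_acyclic_def)

lemma path_idempotent: "m (Some (p, p, w)) (Some (p, p, w)) = Some (p, p, w)"
  by (simp add: gis_mult_def pstart_def)

lemma path_idempotent_mult_left: "m (Some (p, p, w)) (Some (p, q, w)) = Some (p, q, w)"
  by (simp add: gis_mult_def pstart_def)

lemma path_idempotent_mult_right: "m (Some (p, q, w)) (Some (q, q, w)) = Some (p, q, w)"
  by (simp add: gis_mult_def pstart_def)

lemma path_mult_inverse_path: "m (Some (p, [], w)) (Some ([], q, w)) = Some (p, q, w)"
  by (simp add: gis_mult_def pstart_def)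

lemma vertices_orthogonal: "w \<noteq> w' \<Longrightarrow> m (Some ([], [], w)) (Some ([], [], w')) = None"
  by (auto simp: gis_mult_def pstart_def)

lemma path_idempotents_orthogonal:
  assumes "gpath V Ed sr rg p w" "gpath V Ed sr rg p' w" "p \<noteq> p'"
  shows "m (Some (p, p, w)) (Some (p', p', w)) = None"
proof -
  have "\<nexists>z. p' = p @ z \<and> pstart sr w z = w" "\<nexists>z. p = p' @ z \<and> pstart sr w z = w"
    using closed_suffix_Nil assms by auto
  then show ?thesis
    by (simp add: gis_mult_def)
qed

lemma square_nonzero_imp_idempotent:
  assumes "Some (p, q, w) \<in> G" "m (Some (p, q, w)) (Some (p, q, w)) \<noteq> None"
  shows "p = q"
  using assms closed_suffix_Nil by (auto simp: gis_mult_def split: if_splits)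

lemma vertex_mult_nonzero_imp_pstart:
  "m (Some ([], [], w)) (Some (p, q, w')) \<noteq> None \<Longrightarrow> pstart sr w' p = w"
  by (auto simp: gis_mult_def pstart_def split: if_splits)

lemma path_idempotents_nonorthogonal_hd:
  "m (Some (p, p, w)) (Some (p', p', w')) \<noteq> None \<Longrightarrow> p \<noteq> [] \<Longrightarrow> p' \<noteq> [] \<Longrightarrow> hd p = hd p'"
  by (auto simp: gis_mult_def split: if_splits)

lemma vertex_mult_edge_idempotent:
  "m (Some ([], [], sr e)) (Some ([e], [e], rg e)) = Some ([e], [e], rg e)"
  by (simp add: gis_mult_def pstart_def)

lemma path_idempotent_mult_first_edge:
  assumes "gpath V Ed sr rg p w" "p \<noteq> []"
  shows "m (Some (p, p, w)) (Some ([hd p], [hd p], rg (hd p))) = Some (p, p, w)"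
proof -
  obtain e p' where p: "p = e # p'"
    using assms(2) by (cases p) auto
  have "pstart sr w p' = rg e"
  proof (cases p')
    case Nil
    then show ?thesis
      using assms(1) p by (simp add: gpath_def pstart_def)
  next
    case (Cons e' p'')
    then show ?thesis
      using assms(1) p unfolding gpath_def pstart_def by (metis length_Cons nth_Cons_0 nth_Cons_Suc zero_less_Suc
          Suc_less_eq list.sel(1) list.distinct(1))
  qed
  then show ?thesis
    using p by (auto simp: gis_mult_def pstart_def)
qed

lemma nonzero_square_and_vertex_product:
  assumes "y \<in> G" "m (Some ([], [], w)) y \<noteq> None" "m y y \<noteq> None" "y \<noteq> Some ([], [], w)"
  obtains p w' where "y = Some (p, p, w')" "gpath V Ed sr rg p w'" "p \<noteq> []" "sr (hd p) = w"
proof -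
  obtain p q w' where y: "y = Some (p, q, w')"
    using assms(3) by (cases y) auto
  then have "p = q"
    using assms(1,3) square_nonzero_imp_idempotent by blast
  moreover have "pstart sr w' p = w"
    using assms(2) y vertex_mult_nonzero_imp_pstart by blast
  ultimately have "p \<noteq> []" "sr (hd p) = w"
    using assms(4) y by (auto simp: pstart_def split: if_splits)
  then show thesis
    using that y \<open>p = q\<close> assms(1) by auto
qed

lemma sandwich_self: "m (m (Some ([], u, w)) (Some (u, v, w))) (Some (v, [], w)) = Some ([], [], w)"
  by (simp add: gis_mult_def pstart_def)

lemma sandwich_preimage_vertex_finite:
  "finite {z. m (m (Some ([], u, w)) z) (Some (v, [], w)) = Some ([], [], w)}"
proof (rule finite_subset)
  \<comment> \<open>u^-1 z v = r(u) forces z = u' v'^-1 with u = u' x and v = v' x, so z is determined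
    by the length of u'.\<close>
  let ?split = "\<lambda>i. Some (take i u, take (length v - (length u - i)) v, pstart sr w (drop i u))"
  show "finite (?split ` {..length u})"
    by simp
  show "{z. m (m (Some ([], u, w)) z) (Some (v, [], w)) = Some ([], [], w)} \<subseteq> ?split ` {..length u}"
  proof clarify
    fix z
    assume z: "m (m (Some ([], u, w)) z) (Some (v, [], w)) = Some ([], [], w)"
    then obtain p q w' where zs: "z = Some (p, q, w')"
      by (cases z) auto
    show "z \<in> ?split ` {..length u}"
    proof (cases "\<exists>r. p = u @ r \<and> pstart sr w' r = w")
      case True
      then obtain r where r: "p = u @ r" "pstart sr w' r = w"
        by blast
      then have "m (Some ([], u, w)) z = Some (r, q, w')"
        using zs by (auto simp: gis_mult_def)
      then have "r = [] \<and> q = v \<and> w' = w"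
        using z by (auto simp: gis_mult_def pstart_def split: if_splits)
      then show ?thesis
        using r zs by (intro image_eqI[where x="length u"]) (auto simp: pstart_def)
    next
      case False
      then obtain r where r: "u = p @ r" "pstart sr w r = w'"
        using z zs by (auto simp: gis_mult_def split: if_splits)
      then have "m (Some ([], u, w)) z = Some ([], q @ r, w)"
        using zs False by (auto simp: gis_mult_def pstart_def)
      then have "q @ r = v"
        using z by (auto simp: gis_mult_def pstart_def split: if_splits)
      then show ?thesis
        using r zs by (intro image_eqI[where x="length p"]) auto
    qed
  qed
qed

end

section \<open>Hausdorff semigroup topologies are discrete away from zero\<close>

locale gis_semigroup_topology = acyclic_graph V Ed sr rg
  for V :: "'v set" and Ed :: "'e set" and sr rg :: "'e \<Rightarrow> 'v" +
  fixes \<tau> :: "('v, 'e) gis topology"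
  assumes carrier: "topspace \<tau> = gis_carrier V Ed sr rg"
    and Hausdorff: "Hausdorff_space \<tau>"
    and semigroup: "topological_semigroup \<tau> (gis_mult sr)"
begin

lemma t1: "t1_space \<tau>"
  using Hausdorff by (rule Hausdorff_imp_t1_space)

lemma vertex_nbhd_path_idempotents:
  assumes "w \<in> V"
  obtains N where "openin \<tau> N" "Some ([], [], w) \<in> N"
    "\<And>a b. a \<in> N \<Longrightarrow> b \<in> N \<Longrightarrow> m a b \<noteq> None"
    "\<And>y. y \<in> N \<Longrightarrow> y \<noteq> Some ([], [], w) \<Longrightarrow>
       \<exists>p w'. y = Some (p, p, w') \<and> gpath V Ed sr rg p w' \<and> p \<noteq> [] \<and> sr (hd p) = w"
proof -
  have w_top: "Some ([], [], w) \<in> topspace \<tau>"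
    using assms carrier by simp
  obtain N where N: "openin \<tau> N" "Some ([], [], w) \<in> N"
    and nonzero: "\<And>a b. a \<in> N \<Longrightarrow> b \<in> N \<Longrightarrow> m a b \<noteq> None"
    using products_avoid_nbhd[OF t1 semigroup w_top, of None] carrier path_idempotent[of "[]" w]
    by auto
  have "\<exists>p w'. y = Some (p, p, w') \<and> gpath V Ed sr rg p w' \<and> p \<noteq> [] \<and> sr (hd p) = w"
    if "y \<in> N" "y \<noteq> Some ([], [], w)" for y
  proof -
    have "y \<in> G"
      using N(1) that(1) openin_subset carrier by blast
    then show ?thesis
      using nonzero_square_and_vertex_product[of y w] that nonzero N(2) by metis
  qed
  then show thesis
    using that N nonzero by blast
qed

lemma vertex_isolated:
  assumes "w \<in> V"
  shows "openin \<tau> {Some ([], [], w)}"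
proof -
  let ?w = "Some ([], [], w)"
  obtain N where N: "openin \<tau> N" "?w \<in> N"
    and nonzero: "\<And>a b. a \<in> N \<Longrightarrow> b \<in> N \<Longrightarrow> m a b \<noteq> None"
    and from_vertex: "\<And>y. y \<in> N \<Longrightarrow> y \<noteq> ?w \<Longrightarrow>
       \<exists>p w'. y = Some (p, p, w') \<and> gpath V Ed sr rg p w' \<and> p \<noteq> [] \<and> sr (hd p) = w"
    using vertex_nbhd_path_idempotents[OF assms] by blast
  show ?thesis
  proof (cases "N \<subseteq> {?w}")
    case True
    then show ?thesis
      using N by (metis subset_singletonD singleton_iff empty_iff)
  next
    case False
    then obtain y0 where "y0 \<in> N" "y0 \<noteq> ?w"
      by blast
    then obtain p0 w0 where y0: "y0 = Some (p0, p0, w0)" "gpath V Ed sr rg p0 w0" "p0 \<noteq> []"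
        "sr (hd p0) = w"
      using from_vertex by blast
    define e where "e = hd p0"
    let ?e = "Some ([e], [e], rg e)"
    have "e \<in> Ed"
      using y0(2,3) by (auto simp: gpath_def e_def)
    then have e_top: "?e \<in> topspace \<tau>"
      using graph carrier by (auto simp: gpath_def)
    define F where "F = {t \<in> topspace \<tau>. m t ?e = t}"
    have "closedin \<tau> {t \<in> topspace \<tau>. m t ?e = id t}"
      using Hausdorff continuous_map_semigroup_right[OF semigroup e_top] continuous_map_id
      by (rule closedin_continuous_maps_eq)
    then have "closedin \<tau> F"
      by (simp add: F_def)
    then have "openin \<tau> (N - F)"
      using N(1) by blast
    moreover have "?w \<in> N - F"
      using N(2) vertex_mult_edge_idempotent[of e] y0(4) by (simp add: F_def e_def)
    moreover have "y \<in> {?w}" if y: "y \<in> N - F" for y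
    proof (rule ccontr)
      assume "y \<notin> {?w}"
      then obtain p w' where p: "y = Some (p, p, w')" "gpath V Ed sr rg p w'" "p \<noteq> []"
        using from_vertex y by blast
      then have "hd p = e"
        using path_idempotents_nonorthogonal_hd nonzero[of y y0] y \<open>y0 \<in> N\<close> y0 e_def by auto
      then have "m y ?e = y"
        using path_idempotent_mult_first_edge[OF p(2,3)] p(1) by simp
      then show False
        using y N(1) openin_subset by (auto simp: F_def)
    qed
    ultimately show ?thesis
      by (metis subsetI subset_singletonD singleton_iff empty_iff)
  qed
qed

lemma nonzero_isolated:
  assumes "a \<in> topspace \<tau>" "a \<noteq> None"
  shows "openin \<tau> {a}"
proof -
  obtain u v w where a: "a = Some (u, v, w)"
    using assms(2) by auto
  then have paths: "gpath V Ed sr rg u w" "gpath V Ed sr rg v w"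
    using assms(1) carrier by auto
  then have "w \<in> V"
    by (simp add: gpath_def)
  let ?l = "Some ([], u, w)" and ?r = "Some (v, [], w)"
  define F where "F = {z \<in> topspace \<tau>. m (m ?l z) ?r \<in> {Some ([], [], w)}}"
  have "?l \<in> topspace \<tau>" "?r \<in> topspace \<tau>"
    using paths \<open>w \<in> V\<close> carrier by auto
  then have "continuous_map \<tau> \<tau> ((\<lambda>z. m z ?r) \<circ> m ?l)"
    using continuous_map_semigroup_left[OF semigroup, of ?l]
      continuous_map_semigroup_right[OF semigroup, of ?r] continuous_map_compose by blast
  then have "openin \<tau> {z \<in> topspace \<tau>. ((\<lambda>z. m z ?r) \<circ> m ?l) z \<in> {Some ([], [], w)}}"
    using vertex_isolated[OF \<open>w \<in> V\<close>] by (rule openin_continuous_map_preimage)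
  then have "openin \<tau> F"
    by (simp add: F_def)
  moreover have "finite F"
    using sandwich_preimage_vertex_finite[of u w v] unfolding F_def
    by (rule finite_subset[rotated]) auto
  moreover have "a \<in> F"
    using assms(1) a sandwich_self by (simp add: F_def)
  ultimately show ?thesis
    by (rule isolated_if_finite_open_nbhd[OF t1])
qed

lemma compact_iff_cofinite_nbhds_zero:
  "compact_space \<tau> \<longleftrightarrow> (\<forall>U. openin \<tau> U \<and> None \<in> U \<longrightarrow> finite (topspace \<tau> - U))"
  using compact_space_iff_cofinite_nbhds[of None \<tau>] nonzero_isolated carrier by simp

lemma compact_iff_tau_c: "compact_space \<tau> \<longleftrightarrow> is_tau_c V Ed sr rg \<tau>"
  unfolding is_tau_c_def carrier[symmetric] compact_iff_cofinite_nbhds_zero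
  using openin_iff_cofinite_nbhds[OF t1, of None] nonzero_isolated by simp

end

section \<open>Dense embeddings into CLP-compact semigroups\<close>

locale gis_dense_CLP_embedding = gis_semigroup_topology V Ed sr rg \<tau>
  for V :: "'v set" and Ed :: "'e set" and sr rg :: "'e \<Rightarrow> 'v" and \<tau> :: "('v, 'e) gis topology" +
  fixes S :: "'s topology" and mS :: "'s \<Rightarrow> 's \<Rightarrow> 's" and h :: "('v, 'e) gis \<Rightarrow> 's"
  assumes dense_embedding: "dense_CLP_embedding \<tau> (gis_mult sr) S mS h"
begin

lemma S_Hausdorff: "Hausdorff_space S"
  and S_semigroup: "topological_semigroup S mS"
  and S_CLP_compact: "CLP_compact S"
  and h_embedding: "embedding_map \<tau> S h"
  and h_mult: "x \<in> topspace \<tau> \<Longrightarrow> y \<in> topspace \<tau> \<Longrightarrow> h (m x y) = mS (h x) (h y)"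
  and h_dense: "S closure_of (h ` topspace \<tau>) = topspace S"
  using dense_embedding by (simp_all add: dense_CLP_embedding_def)

lemma h_in_topspace: "x \<in> topspace \<tau> \<Longrightarrow> h x \<in> topspace S"
  using embedding_map_def h_embedding homeomorphic_imp_surjective_map by fastforce

lemma h_None_zero:
  assumes "s \<in> topspace S"
  shows "mS s (h None) = h None" "mS (h None) s = h None"
proof -
  have "h None \<in> topspace S"
    using h_in_topspace carrier by simp
  moreover have "mS d (h None) = h None \<and> mS (h None) d = h None" if d: "d \<in> h ` topspace \<tau>" for d
  proof -
    obtain g where "g \<in> topspace \<tau>" "d = h g"
      using d by blast
    then show ?thesis
      using h_mult[of g None] h_mult[of None g] carrier by simp
  qed
  ultimately show "mS s (h None) = h None" "mS (h None) s = h None"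
    using right_zero_of_dense[OF S_Hausdorff S_semigroup h_dense _ _ assms]
      right_zero_of_dense[OF S_Hausdorff topological_semigroup_flip[OF S_semigroup] h_dense _ _ assms]
    by auto
qed

lemma h_nonzero_isolated:
  assumes "g \<in> topspace \<tau>" "g \<noteq> None"
  shows "openin S {h g}"
proof (rule isolated_in_dense_subspace[OF Hausdorff_imp_t1_space[OF S_Hausdorff] h_dense])
  have "openin (subtopology S (h ` topspace \<tau>)) (h ` {g})"
    using homeomorphic_map_openness[of \<tau> _ h "{g}"] h_embedding nonzero_isolated[OF assms] assms(1)
    by (simp add: embedding_map_def)
  then show "openin (subtopology S (h ` topspace \<tau>)) {h g}"
    by simp
qed

lemma image_family_cluster:
  assumes "infinite J" "x ` J \<subseteq> topspace \<tau>"
  shows "\<exists>s. cofinite_cluster S J (\<lambda>i. h (x i)) s"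
proof -
  have "(\<lambda>i. h (x i)) ` J \<subseteq> topspace S"
    using assms(2) h_in_topspace by blast
  moreover have "openin S {h (x i)}" if "i \<in> J" "h (x i) \<noteq> h None" for i
  proof (rule h_nonzero_isolated)
    show "x i \<in> topspace \<tau>"
      using assms(2) that(1) by auto
    show "x i \<noteq> None"
      using that(2) by metis
  qed
  ultimately obtain s where "cofinite_cluster S J (\<lambda>i. h (x i)) s"
    by (rule CLP_compact_cofinite_cluster[OF S_CLP_compact Hausdorff_imp_t1_space[OF S_Hausdorff] assms(1)])
  then show ?thesis
    by blast
qed

lemma orthogonal_idempotents_tend_to_zero:
  assumes e: "e ` I \<subseteq> topspace \<tau>" and idem: "\<And>i. i \<in> I \<Longrightarrow> m (e i) (e i) = e i"
    and orth: "\<And>i j. i \<in> I \<Longrightarrow> j \<in> I \<Longrightarrow> i \<noteq> j \<Longrightarrow> m (e i) (e j) = None"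
  shows "cofinite_limit S I (\<lambda>i. h (e i)) (h None)"
proof (rule orthogonal_idempotents_cofinite_limit[OF S_Hausdorff S_semigroup])
  have e_top: "e i \<in> topspace \<tau>" if "i \<in> I" for i
    using e that by auto
  show "h None \<in> topspace S" "(\<lambda>i. h (e i)) ` I \<subseteq> topspace S"
    using e_top carrier h_in_topspace by auto
  show "mS (h (e i)) (h (e i)) = h (e i)" if "i \<in> I" for i
    using h_mult[OF e_top e_top, OF that that] idem[OF that] by simp
  show "mS (h (e i)) (h (e j)) = h None" if "i \<in> I" "j \<in> I" "i \<noteq> j" for i j
    using h_mult[OF e_top e_top, OF that(1,2)] orth[OF that] by simp
  show "\<exists>s. cofinite_cluster S J (\<lambda>i. h (e i)) s" if "J \<subseteq> I" "infinite J" for J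
    using that(2) by (rule image_family_cluster) (use e that(1) in auto)
qed

lemma tends_to_zero_mult_left:
  assumes a: "a ` I \<subseteq> topspace \<tau>" and b: "b ` I \<subseteq> topspace \<tau>"
    and lim: "cofinite_limit S I (\<lambda>i. h (a i)) (h None)"
  shows "cofinite_limit S I (\<lambda>i. h (m (b i) (a i))) (h None)"
proof -
  have lim': "cofinite_limit S I (\<lambda>i. mS (h (b i)) (h (a i))) (h None)"
  proof (rule cofinite_limit_zero_mult_left[OF S_semigroup _ _ lim])
    show "h None \<in> topspace S"
      using carrier h_in_topspace by simp
    show "mS s (h None) = h None" if "s \<in> topspace S" for s
      using that by (rule h_None_zero)
    show "\<exists>s. cofinite_cluster S J (\<lambda>i. h (b i)) s" if "J \<subseteq> I" "infinite J" for J
      using that(2) by (rule image_family_cluster) (use b that(1) in auto)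
  qed
  have "h (m (b i) (a i)) = mS (h (b i)) (h (a i))" if "i \<in> I" for i
    by (rule h_mult) (use a b that in auto)
  then show ?thesis
    using lim' by (subst cofinite_limit_cong)
qed

lemma tends_to_zero_mult_right:
  assumes a: "a ` I \<subseteq> topspace \<tau>" and b: "b ` I \<subseteq> topspace \<tau>"
    and lim: "cofinite_limit S I (\<lambda>i. h (a i)) (h None)"
  shows "cofinite_limit S I (\<lambda>i. h (m (a i) (b i))) (h None)"
proof -
  have lim': "cofinite_limit S I (\<lambda>i. mS (h (a i)) (h (b i))) (h None)"
  proof (rule cofinite_limit_zero_mult_right[OF S_semigroup _ _ lim])
    show "h None \<in> topspace S"
      using carrier h_in_topspace by simp
    show "mS (h None) s = h None" if "s \<in> topspace S" for s
      using that by (rule h_None_zero)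
    show "\<exists>s. cofinite_cluster S J (\<lambda>i. h (b i)) s" if "J \<subseteq> I" "infinite J" for J
      using that(2) by (rule image_family_cluster) (use b that(1) in auto)
  qed
  have "h (m (a i) (b i)) = mS (h (a i)) (h (b i))" if "i \<in> I" for i
    by (rule h_mult) (use a b that in auto)
  then show ?thesis
    using lim' by (subst cofinite_limit_cong)
qed

lemma distinct_path_idempotents_tend_to_zero:
  assumes "inj_on p I" "\<And>i. i \<in> I \<Longrightarrow> gpath V Ed sr rg (p i) w"
  shows "cofinite_limit S I (\<lambda>i. h (Some (p i, p i, w))) (h None)"
proof (rule orthogonal_idempotents_tend_to_zero)
  show "(\<lambda>i. Some (p i, p i, w)) ` I \<subseteq> topspace \<tau>"
    using assms(2) carrier by auto
  show "m (Some (p i, p i, w)) (Some (p i, p i, w)) = Some (p i, p i, w)" for i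
    by (rule path_idempotent)
  show "m (Some (p i, p i, w)) (Some (p j, p j, w)) = None" if "i \<in> I" "j \<in> I" "i \<noteq> j" for i j
    using path_idempotents_orthogonal assms that inj_onD by metis
qed

lemma distinct_ranges_tend_to_zero:
  assumes "inj_on w I"
    and c: "\<And>c. c \<in> I \<Longrightarrow> c = Some (u c, v c, w c) \<and> gpath V Ed sr rg (u c) (w c) \<and> gpath V Ed sr rg (v c) (w c)"
  shows "cofinite_limit S I (\<lambda>c. h c) (h None)"
proof -
  have top: "(\<lambda>c. Some ([], [], w c)) ` I \<subseteq> topspace \<tau>" "(\<lambda>c. Some (u c, [], w c)) ` I \<subseteq> topspace \<tau>"
    "(\<lambda>c. Some ([], v c, w c)) ` I \<subseteq> topspace \<tau>"
    using c carrier by (auto simp: gpath_def)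
  have "cofinite_limit S I (\<lambda>c. h (Some ([], [], w c))) (h None)"
  proof (rule orthogonal_idempotents_tend_to_zero[OF top(1)])
    show "m (Some ([], [], w i)) (Some ([], [], w i)) = Some ([], [], w i)" for i
      by (rule path_idempotent)
    show "m (Some ([], [], w i)) (Some ([], [], w j)) = None" if "i \<in> I" "j \<in> I" "i \<noteq> j" for i j
      using vertices_orthogonal assms(1) that inj_onD by metis
  qed
  then have "cofinite_limit S I (\<lambda>c. h (m (Some (u c, [], w c)) (Some ([], [], w c)))) (h None)"
    by (rule tends_to_zero_mult_left[OF top(1,2)])
  then have "cofinite_limit S I (\<lambda>c. h (Some (u c, [], w c))) (h None)"
    by (simp add: path_idempotent_mult_right)
  then have "cofinite_limit S I (\<lambda>c. h (m (Some (u c, [], w c)) (Some ([], v c, w c)))) (h None)"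
    by (rule tends_to_zero_mult_right[OF top(2,3)])
  moreover have "h (m (Some (u c, [], w c)) (Some ([], v c, w c))) = h c" if "c \<in> I" for c
    using c[OF that] by (simp add: path_mult_inverse_path)
  ultimately show ?thesis
    by (subst (asm) cofinite_limit_cong)
qed

lemma distinct_left_paths_tend_to_zero:
  assumes "inj_on u I"
    and c: "\<And>c. c \<in> I \<Longrightarrow> c = Some (u c, v c, w) \<and> gpath V Ed sr rg (u c) w \<and> gpath V Ed sr rg (v c) w"
  shows "cofinite_limit S I (\<lambda>c. h c) (h None)"
proof -
  have "Some (u c, u c, w) \<in> topspace \<tau> \<and> c \<in> topspace \<tau>" if "c \<in> I" for c
    using c[OF that] carrier by (metis Some_in_carrier_iff)
  then have top: "(\<lambda>c. Some (u c, u c, w)) ` I \<subseteq> topspace \<tau>" "(\<lambda>c. c) ` I \<subseteq> topspace \<tau>"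
    by auto
  have "cofinite_limit S I (\<lambda>c. h (Some (u c, u c, w))) (h None)"
    using assms by (intro distinct_path_idempotents_tend_to_zero) auto
  then have "cofinite_limit S I (\<lambda>c. h (m (Some (u c, u c, w)) c)) (h None)"
    by (rule tends_to_zero_mult_right[OF top])
  moreover have "h (m (Some (u c, u c, w)) c) = h c" if "c \<in> I" for c
    using c[OF that] by (metis path_idempotent_mult_left)
  ultimately show ?thesis
    by (subst (asm) cofinite_limit_cong)
qed

lemma distinct_right_paths_tend_to_zero:
  assumes "inj_on v I"
    and c: "\<And>c. c \<in> I \<Longrightarrow> c = Some (u c, v c, w) \<and> gpath V Ed sr rg (u c) w \<and> gpath V Ed sr rg (v c) w"
  shows "cofinite_limit S I (\<lambda>c. h c) (h None)"
proof -
  have "Some (v c, v c, w) \<in> topspace \<tau> \<and> c \<in> topspace \<tau>" if "c \<in> I" for c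
    using c[OF that] carrier by (metis Some_in_carrier_iff)
  then have top: "(\<lambda>c. Some (v c, v c, w)) ` I \<subseteq> topspace \<tau>" "(\<lambda>c. c) ` I \<subseteq> topspace \<tau>"
    by auto
  have "cofinite_limit S I (\<lambda>c. h (Some (v c, v c, w))) (h None)"
    using assms by (intro distinct_path_idempotents_tend_to_zero) auto
  then have "cofinite_limit S I (\<lambda>c. h (m c (Some (v c, v c, w)))) (h None)"
    by (rule tends_to_zero_mult_left[OF top])
  moreover have "h (m c (Some (v c, v c, w))) = h c" if "c \<in> I" for c
    using c[OF that] by (metis path_idempotent_mult_right)
  ultimately show ?thesis
    by (subst (asm) cofinite_limit_cong)
qed

lemma common_range_subset_tends_to_zero:
  assumes "infinite C"
    and c: "\<And>c. c \<in> C \<Longrightarrow> c = Some (u c, v c, w) \<and> gpath V Ed sr rg (u c) w \<and> gpath V Ed sr rg (v c) w"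
  obtains I where "I \<subseteq> C" "infinite I" "cofinite_limit S I (\<lambda>c. h c) (h None)"
proof -
  have "C \<subseteq> (\<lambda>(p, q). Some (p, q, w)) ` (u ` C \<times> v ` C)"
    using c by (auto simp: image_iff) (metis)
  then have "infinite (u ` C) \<or> infinite (v ` C)"
    using assms(1) by (meson finite_SigmaI finite_imageI finite_subset)
  then show thesis
  proof
    assume "infinite (u ` C)"
    then obtain I where I: "I \<subseteq> C" "infinite I" "inj_on u I"
      by (rule infinite_inj_on_subset)
    then have "cofinite_limit S I (\<lambda>c. h c) (h None)"
      using c by (intro distinct_left_paths_tend_to_zero[where v=v]) auto
    then show thesis
      using that I by blast
  next
    assume "infinite (v ` C)"
    then obtain I where I: "I \<subseteq> C" "infinite I" "inj_on v I"
      by (rule infinite_inj_on_subset)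
    then have "cofinite_limit S I (\<lambda>c. h c) (h None)"
      using c by (intro distinct_right_paths_tend_to_zero[where u=u]) auto
    then show thesis
      using that I by blast
  qed
qed

lemma nonzero_subset_tends_to_zero:
  assumes "C \<subseteq> topspace \<tau> - {None}" "infinite C"
  obtains I where "I \<subseteq> C" "infinite I" "cofinite_limit S I (\<lambda>c. h c) (h None)"
proof -
  define u v w where "u c = fst (the c)" and "v c = fst (snd (the c))" and "w c = snd (snd (the c))"
    for c :: "('v, 'e) gis"
  have c: "c = Some (u c, v c, w c) \<and> gpath V Ed sr rg (u c) (w c) \<and> gpath V Ed sr rg (v c) (w c)"
    if c_in: "c \<in> C" for c
  proof -
    obtain p q w' where "c = Some (p, q, w')"
      using assms(1) c_in by (cases c) auto
    moreover have "c \<in> G"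
      using assms(1) c_in carrier by auto
    ultimately show ?thesis
      by (simp add: u_def v_def w_def)
  qed
  show thesis
  proof (cases "finite (w ` C)")
    case True
    then obtain c0 where "infinite {c \<in> C. w c = w c0}"
      using pigeonhole_infinite[OF assms(2)] by blast
    moreover have "c = Some (u c, v c, w c0) \<and> gpath V Ed sr rg (u c) (w c0) \<and> gpath V Ed sr rg (v c) (w c0)"
      if "c \<in> {c \<in> C. w c = w c0}" for c
      using that c[of c] by auto
    ultimately obtain I where I: "I \<subseteq> {c \<in> C. w c = w c0}" "infinite I"
        "cofinite_limit S I (\<lambda>c. h c) (h None)"
      by (rule common_range_subset_tends_to_zero)
    show thesis
      by (rule that[of I]) (use I in auto)
  next
    case False
    then obtain I where I: "I \<subseteq> C" "infinite I" "inj_on w I"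
      by (rule infinite_inj_on_subset)
    have "cofinite_limit S I (\<lambda>c. h c) (h None)"
      by (rule distinct_ranges_tend_to_zero[where u=u and v=v, OF I(3)]) (use c I(1) in auto)
    then show thesis
      by (rule that[OF I(1,2)])
  qed
qed

lemma nbhd_of_zero_cofinite:
  assumes "openin \<tau> U" "None \<in> U"
  shows "finite (topspace \<tau> - U)"
proof (rule ccontr)
  assume "infinite (topspace \<tau> - U)"
  then obtain I where I: "I \<subseteq> topspace \<tau> - U" "infinite I" "cofinite_limit S I (\<lambda>c. h c) (h None)"
    using nonzero_subset_tends_to_zero[of "topspace \<tau> - U"] assms(2) by blast
  then have "cofinite_limit \<tau> I (\<lambda>c. c) None"
    by (intro embedding_map_cofinite_limit[OF h_embedding]) auto
  then have "finite {c \<in> I. c \<notin> U}"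
    using assms by (simp add: cofinite_limit_def)
  moreover have "{c \<in> I. c \<notin> U} = I"
    using I(1) by blast
  ultimately show False
    using I(2) by simp
qed

lemma compact_space_tau: "compact_space \<tau>"
  using compact_iff_cofinite_nbhds_zero nbhd_of_zero_cofinite by blast

end

theorem theorem4p1:
  fixes V :: "'v set" and Ed :: "'e set" and sr rg :: "'e \<Rightarrow> 'v"
    and \<tau> :: "('v, 'e) gis topology"
  assumes graph: "\<forall>e\<in>Ed. sr e \<in> V \<and> rg e \<in> V"
    and acyc: "graph_acyclic V Ed sr rg"
    and carrier: "topspace \<tau> = gis_carrier V Ed sr rg"
    and haus: "Hausdorff_space \<tau>"
    and tsg: "topological_semigroup \<tau> (gis_mult sr)"
  shows "((\<exists>(S :: 's topology) mS h. dense_CLP_embedding \<tau> (gis_mult sr) S mS h)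
            \<longrightarrow> compact_space \<tau>)
       \<and> (compact_space \<tau> \<longrightarrow>
            (\<exists>(S :: ('v, 'e) gis topology) mS h. dense_CLP_embedding \<tau> (gis_mult sr) S mS h))
       \<and> (compact_space \<tau> \<longleftrightarrow> is_tau_c V Ed sr rg \<tau>)"
proof -
  interpret gis_semigroup_topology V Ed sr rg \<tau>
    using graph acyc carrier haus tsg by unfold_locales
  have "compact_space \<tau>" if "dense_CLP_embedding \<tau> (gis_mult sr) S mS h"
    for S :: "'s topology" and mS h
  proof -
    interpret gis_dense_CLP_embedding V Ed sr rg \<tau> S mS h
      using that by unfold_locales
    show ?thesis
      by (rule compact_space_tau)
  qed
  moreover have "dense_CLP_embedding \<tau> (gis_mult sr) \<tau> (gis_mult sr) id" if "compact_space \<tau>"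
    using haus tsg that by (rule self_dense_CLP_embedding)
  ultimately show ?thesis
    using compact_iff_tau_c by blast
qed

end
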